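(* Let $n\ge 2$ and $u,v>0$. There exists an $n$-simplex having one edge of length $v$ and all its remaining edges of length $u$ if and only if $$0<\frac{v}{u}<\sqrt{\frac{2n}{n-1}}.$$
   Context: An $n$-simplex is the convex hull of $n+1$ affinely independent points in a Euclidean space (so it is non-degenerate). *)

theory Defs
  imports "HOL-Analysis.Analysis"
begin

text \<open>An n-simplex is the convex hull of n+1 affinely independent points; it is
  determined by its vertex set V. The edges are the segments between two distinct vertices.\<close>
definition simplex_vertices :: "nat \<Rightarrow> 'a::euclidean_space set \<Rightarrow> bool" where
  "simplex_vertices n V \<longleftrightarrow> finite V \<and> card V = n + 1 \<and> \<not> affine_dependent V"

definition one_edge_v_rest_u :: "'a::euclidean_space set \<Rightarrow> real \<Rightarrow> real \<Rightarrow> bool" where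
  "one_edge_v_rest_u V v u \<longleftrightarrow>
     (\<exists>a\<in>V. \<exists>b\<in>V. a \<noteq> b \<and> dist a b = v \<and>
        (\<forall>x\<in>V. \<forall>y\<in>V. x \<noteq> y \<and> {x, y} \<noteq> {a, b} \<longrightarrow> dist x y = u))"

end

theory Submission
  imports Defs
begin

text \<open>Let \<open>a, b\<close> be the ends of the edge of length \<open>v\<close> and \<open>C\<close> the other \<open>m = n - 1\<close>
  vertices. The Gram matrix of the vectors \<open>b - a\<close>, \<open>c - a\<close> (\<open>c \<in> C\<close>) is determined by \<open>u\<close>
  and \<open>v\<close>, and it gives the squared distance \<open>(2 (m + 1) u\<^sup>2 - m v\<^sup>2) / (4 m)\<close> between the
  midpoint of \<open>a b\<close> and the centroid of \<open>C\<close>; affine independence makes these points differ.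
  Conversely, put \<open>C\<close> at \<open>(u / sqrt 2) e\<^sub>i\<close> for orthonormal \<open>e\<^sub>0, \<dots>, e\<^sub>m\<^sub>-\<^sub>1\<close>, a regular
  simplex with edge \<open>u\<close>, and \<open>a, b\<close> at \<open>h (e\<^sub>0 + \<dots> + e\<^sub>m\<^sub>-\<^sub>1) \<plusminus> (v / 2) e\<^sub>m\<close>; a height \<open>h\<close>
  putting \<open>a, b\<close> at distance \<open>u\<close> from \<open>C\<close> exists exactly under the bound.\<close>

lemma inner_diff_diff_eq_dist:
  fixes a y z :: "'a::real_inner"
  shows "2 * inner (y - a) (z - a) = (dist y a)\<^sup>2 + (dist z a)\<^sup>2 - (dist y z)\<^sup>2"
  by (simp add: dist_norm power2_norm_eq_inner inner_commute algebra_simps)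

lemma inner_sum_self_equiangular:
  fixes w :: "'b \<Rightarrow> 'a::real_inner"
  assumes "finite C"
    and "\<And>c. c \<in> C \<Longrightarrow> inner (w c) (w c) = r"
    and "\<And>c c'. c \<in> C \<Longrightarrow> c' \<in> C \<Longrightarrow> c \<noteq> c' \<Longrightarrow> inner (w c) (w c') = q"
  shows "inner (sum w C) (sum w C) = real (card C) * (r + (real (card C) - 1) * q)"
proof -
  have row: "(\<Sum>c'\<in>C. inner (w c) (w c')) = r + (real (card C) - 1) * q" if "c \<in> C" for c
  proof -
    have "(\<Sum>c'\<in>C. inner (w c) (w c')) = inner (w c) (w c) + (\<Sum>c'\<in>C - {c}. inner (w c) (w c'))"
      using assms(1) that by (simp add: sum.remove)
    also have "(\<Sum>c'\<in>C - {c}. inner (w c) (w c')) = (\<Sum>c'\<in>C - {c}. q)"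
      using assms(3) that by (intro sum.cong) auto
    finally show ?thesis
      using assms(1,2) that by (cases "card C") auto
  qed
  have "inner (sum w C) (sum w C) = (\<Sum>c\<in>C. \<Sum>c'\<in>C. inner (w c) (w c'))"
    by (simp add: inner_sum_left inner_sum_right inner_commute)
  also have "\<dots> = (\<Sum>c\<in>C. r + (real (card C) - 1) * q)"
    using row by (intro sum.cong) auto
  finally show ?thesis by simp
qed

lemma inner_self_apex_combination:
  fixes y :: "'a::real_inner" and w :: "'b \<Rightarrow> 'a"
  assumes "finite C" and "card C = m"
    and "inner y y = v\<^sup>2"
    and "\<And>c. c \<in> C \<Longrightarrow> inner y (w c) = v\<^sup>2 / 2"
    and "\<And>c. c \<in> C \<Longrightarrow> inner (w c) (w c) = u\<^sup>2"
    and "\<And>c c'. c \<in> C \<Longrightarrow> c' \<in> C \<Longrightarrow> c \<noteq> c' \<Longrightarrow> inner (w c) (w c') = u\<^sup>2 / 2"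
  shows "inner (real m *\<^sub>R y - 2 *\<^sub>R sum w C) (real m *\<^sub>R y - 2 *\<^sub>R sum w C)
           = real m * (2 * (real m + 1) * u\<^sup>2 - real m * v\<^sup>2)"
proof -
  have "inner y (sum w C) = (\<Sum>c\<in>C. v\<^sup>2 / 2)"
    unfolding inner_sum_right using assms(4) by (rule sum.cong[OF refl])
  then have ys: "inner y (sum w C) = real m * v\<^sup>2 / 2"
    using assms(2) by simp
  have ss: "inner (sum w C) (sum w C) = real m * (u\<^sup>2 + (real m - 1) * u\<^sup>2 / 2)"
    using inner_sum_self_equiangular[of C w "u\<^sup>2" "u\<^sup>2 / 2"] assms(1,2,5,6) by simp
  have "inner (real m *\<^sub>R y - 2 *\<^sub>R sum w C) (real m *\<^sub>R y - 2 *\<^sub>R sum w C)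
      = (real m)\<^sup>2 * inner y y - 4 * real m * inner y (sum w C) + 4 * inner (sum w C) (sum w C)"
    by (simp add: inner_commute power2_eq_square algebra_simps)
  also have "\<dots> = real m * (2 * (real m + 1) * u\<^sup>2 - real m * v\<^sup>2)"
    unfolding assms(3) ys ss by (simp add: power2_eq_square field_simps)
  finally show ?thesis .
qed

lemma affine_independent_midpoint_ne_centroid:
  fixes V :: "'a::real_vector set"
  assumes "finite V" and "\<not> affine_dependent V"
    and "a \<in> V" and "b \<in> V" and "a \<noteq> b" and "V - {a, b} \<noteq> {}"
  shows "real (card (V - {a, b})) *\<^sub>R (a + b) \<noteq> 2 *\<^sub>R (\<Sum>c\<in>V - {a, b}. c)"
proof
  let ?C = "V - {a, b}"
  assume eq: "real (card ?C) *\<^sub>R (a + b) = 2 *\<^sub>R (\<Sum>c\<in>?C. c)"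
  define w where "w t = (if t \<in> ?C then -2 else real (card ?C))" for t
  have V: "V = insert a (insert b ?C)"
    using assms(3,4) by auto
  have "sum w V = 0"
    using assms(1,5) by (subst V) (simp add: w_def)
  moreover have "(\<Sum>t\<in>V. w t *\<^sub>R t) = 0"
    using assms(1,5) eq
    by (subst V) (simp add: w_def scaleR_sum_right sum_negf add_diff_eq flip: scaleR_add_right)
  moreover have "w a \<noteq> 0"
    using assms(1,6) by (simp add: w_def)
  ultimately show False
    using affine_dependent_explicit_finite[OF assms(1)] assms(2,3) by blast
qed

lemma simplex_one_edge_bound:
  fixes V :: "'a::euclidean_space set"
  assumes "simplex_vertices n V" and "one_edge_v_rest_u V v u" and "n \<ge> 2"
  shows "(real n - 1) * v\<^sup>2 < 2 * real n * u\<^sup>2"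
proof -
  obtain a b where ab: "a \<in> V" "b \<in> V" "a \<noteq> b" "dist a b = v"
    and rest: "\<And>x y. x \<in> V \<Longrightarrow> y \<in> V \<Longrightarrow> x \<noteq> y \<Longrightarrow> {x, y} \<noteq> {a, b} \<Longrightarrow> dist x y = u"
    using assms(2) unfolding one_edge_v_rest_u_def by blast
  have fin: "finite V" and indep: "\<not> affine_dependent V" and card_V: "card V = n + 1"
    using assms(1) by (auto simp: simplex_vertices_def)
  define m where "m = n - 1"
  have m: "m \<ge> 1" "real m = real n - 1"
    using assms(3) by (auto simp: m_def)
  define C where "C = V - {a, b}"
  have fin_C: "finite C" and card_C: "card C = m"
    using fin card_V ab by (auto simp: C_def m_def card_Diff_subset)
  have dist_C: "dist c a = u" "dist c b = u" "c' \<in> C \<Longrightarrow> c \<noteq> c' \<Longrightarrow> dist c c' = u"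
    if "c \<in> C" for c c'
    using rest that ab by (auto simp: C_def doubleton_eq_iff)
  define z where "z = real m *\<^sub>R (b - a) - 2 *\<^sub>R (\<Sum>c\<in>C. c - a)"
  have "inner z z = real m * (2 * (real m + 1) * u\<^sup>2 - real m * v\<^sup>2)"
    unfolding z_def
  proof (rule inner_self_apex_combination[OF fin_C card_C])
    show "inner (b - a) (b - a) = v\<^sup>2"
      using inner_diff_diff_eq_dist[of b a b] ab(4) by (simp add: dist_commute)
    show "inner (b - a) (c - a) = v\<^sup>2 / 2" if "c \<in> C" for c
      using inner_diff_diff_eq_dist[of b a c] ab(4) dist_C[OF that] by (simp add: dist_commute)
    show "inner (c - a) (c - a) = u\<^sup>2" if "c \<in> C" for c
      using inner_diff_diff_eq_dist[of c a c] dist_C[OF that] by simp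
    show "inner (c - a) (c' - a) = u\<^sup>2 / 2" if "c \<in> C" "c' \<in> C" "c \<noteq> c'" for c c'
      using inner_diff_diff_eq_dist[of c a c'] dist_C that by simp
  qed
  moreover have "z \<noteq> 0"
  proof -
    have "z = real m *\<^sub>R (a + b) - 2 *\<^sub>R (\<Sum>c\<in>C. c)"
      using card_C
      by (simp add: z_def sum_subtractf sum_constant_scaleR algebra_simps flip: scaleR_add_left)
    moreover have "C \<noteq> {}"
      using card_C m(1) by auto
    ultimately show ?thesis
      using affine_independent_midpoint_ne_centroid[OF fin indep ab(1-3)] card_C
      by (simp add: C_def)
  qed
  ultimately have "real m * (2 * (real m + 1) * u\<^sup>2 - real m * v\<^sup>2) > 0"
    by (metis inner_gt_zero_iff)
  then show ?thesis
    using m by (simp add: zero_less_mult_iff)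
qed

lemma obtain_orthonormal_family:
  assumes "DIM('a) \<ge> k"
  obtains e :: "nat \<Rightarrow> 'a::euclidean_space"
  where "\<And>i j. i < k \<Longrightarrow> j < k \<Longrightarrow> inner (e i) (e j) = (if i = j then 1 else 0)"
proof -
  obtain B where B: "B \<subseteq> (Basis :: 'a set)" "finite B" "card B = k"
    using obtain_subset_with_card_n[of k "Basis :: 'a set"] assms by auto
  obtain e where e: "bij_betw e {0..<k} B"
    using ex_bij_betw_nat_finite[OF B(2)] B(3) by auto
  have "inner (e i) (e j) = (if i = j then 1 else 0)" if "i < k" "j < k" for i j
  proof -
    have "e i \<in> Basis" "e j \<in> Basis"
      using e B(1) that by (auto simp: bij_betw_def)
    moreover have "e i = e j \<longleftrightarrow> i = j"
      using e that by (auto simp: bij_betw_def inj_on_def)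
    ultimately show ?thesis
      by (simp add: inner_Basis)
  qed
  then show ?thesis by (rule that)
qed

lemma affine_independent_imageI:
  fixes f :: "'b \<Rightarrow> 'a::real_vector"
  assumes "finite I" and "inj_on f I"
    and "\<And>l. sum l I = 0 \<Longrightarrow> (\<Sum>i\<in>I. l i *\<^sub>R f i) = 0 \<Longrightarrow> \<forall>i\<in>I. l i = 0"
  shows "\<not> affine_dependent (f ` I)"
proof
  assume "affine_dependent (f ` I)"
  then obtain w where "sum w (f ` I) = 0" "(\<Sum>x\<in>f ` I. w x *\<^sub>R x) = 0" "\<exists>x\<in>f ` I. w x \<noteq> 0"
    using affine_dependent_explicit_finite[of "f ` I"] assms(1) by blast
  then show False
    using assms(3)[of "w \<circ> f"] assms(2) by (auto simp: sum.reindex)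
qed

text \<open>Vertices \<open>m\<close> and \<open>m + 1\<close> are apices over the regular simplex formed by the first \<open>m\<close>,
  mirror images of each other in the hyperplane orthogonal to \<open>e m\<close>.\<close>
definition bipyramid_vertex ::
    "(nat \<Rightarrow> 'a::real_vector) \<Rightarrow> nat \<Rightarrow> real \<Rightarrow> real \<Rightarrow> real \<Rightarrow> nat \<Rightarrow> 'a" where
  "bipyramid_vertex e m p h \<alpha> i =
     (if i < m then p *\<^sub>R e i else h *\<^sub>R (\<Sum>k<m. e k) + (if i = m then \<alpha> else - \<alpha>) *\<^sub>R e m)"

context
  fixes e :: "nat \<Rightarrow> 'a::euclidean_space" and m :: nat and p h \<alpha> :: real
  assumes orthonormal: "\<And>i j. i \<le> m \<Longrightarrow> j \<le> m \<Longrightarrow> inner (e i) (e j) = (if i = j then 1 else 0)"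
begin

lemma inner_bipyramid_vertex_frame:
  assumes "j \<le> m"
  shows "inner (bipyramid_vertex e m p h \<alpha> i) (e j) =
           (if i < m then (if i = j then p else 0)
            else if j < m then h else if i = m then \<alpha> else - \<alpha>)"
proof -
  have "inner (\<Sum>k<m. e k) (e j) = (\<Sum>k<m. if k = j then 1 else 0)"
    unfolding inner_sum_left using assms orthonormal by (intro sum.cong) auto
  then have "inner (\<Sum>k<m. e k) (e j) = (if j < m then 1 else 0)"
    by simp
  then show ?thesis
    using assms orthonormal[of i j] orthonormal[of m j]
    by (simp add: bipyramid_vertex_def inner_add_left)
qed

lemma inner_bipyramid_vertex:
  assumes "i \<le> m + 1" and "j \<le> m + 1"
  shows "inner (bipyramid_vertex e m p h \<alpha> i) (bipyramid_vertex e m p h \<alpha> j) =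
           (if i < m \<and> j < m then (if i = j then p\<^sup>2 else 0)
            else if i < m \<or> j < m then p * h
            else if i = j then real m * h\<^sup>2 + \<alpha>\<^sup>2 else real m * h\<^sup>2 - \<alpha>\<^sup>2)"
proof -
  let ?f = "bipyramid_vertex e m p h \<alpha>"
  have sum_frame: "inner (?f i) (\<Sum>k<m. e k) = (if i < m then p else real m * h)"
    by (simp add: inner_sum_right inner_bipyramid_vertex_frame)
  show ?thesis
    using assms inner_bipyramid_vertex_frame[of j i] inner_bipyramid_vertex_frame[of m i] sum_frame
    by (simp add: bipyramid_vertex_def[of e m p h \<alpha> j] inner_add_right power2_eq_square)
qed

lemma dist_bipyramid_vertex:
  assumes "i \<le> m + 1" and "j \<le> m + 1" and "i \<noteq> j"
  shows "(dist (bipyramid_vertex e m p h \<alpha> i) (bipyramid_vertex e m p h \<alpha> j))\<^sup>2 =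
           (if i < m \<and> j < m then 2 * p\<^sup>2
            else if i < m \<or> j < m then p\<^sup>2 - 2 * p * h + real m * h\<^sup>2 + \<alpha>\<^sup>2
            else 4 * \<alpha>\<^sup>2)"
proof -
  let ?f = "bipyramid_vertex e m p h \<alpha>"
  have "(dist (?f i) (?f j))\<^sup>2 = inner (?f i) (?f i) + inner (?f j) (?f j) - 2 * inner (?f i) (?f j)"
    by (simp add: dist_norm power2_norm_eq_inner inner_diff_left inner_diff_right inner_commute)
  then show ?thesis
    using assms inner_bipyramid_vertex[of i i] inner_bipyramid_vertex[of j j]
      inner_bipyramid_vertex[of i j]
    by auto
qed

lemma bipyramid_affine_relation_trivial:
  assumes "p \<noteq> 0" and "\<alpha> \<noteq> 0" and "real m * h \<noteq> p"
    and weights: "(\<Sum>i\<le>m + 1. l i) = 0"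
    and relation: "(\<Sum>i\<le>m + 1. l i *\<^sub>R bipyramid_vertex e m p h \<alpha> i) = 0"
    and "i \<le> m + 1"
  shows "l i = 0"
proof -
  have split: "(\<Sum>i\<le>m + 1. g i) = (\<Sum>i<m. g i) + g m + g (m + 1)" for g :: "nat \<Rightarrow> real"
    by (simp add: lessThan_Suc_atMost[symmetric])
  let ?c = "\<lambda>i j. l i * inner (bipyramid_vertex e m p h \<alpha> i) (e j)"
  have coordinate: "(\<Sum>i<m. ?c i j) + ?c m j + ?c (m + 1) j = 0" for j
    using arg_cong[OF relation, of "\<lambda>x. inner x (e j)"]
    by (simp only: inner_sum_left inner_scaleR_left inner_zero_left split)
  have apex_diff: "\<alpha> * (l m - l (m + 1)) = 0"
    using coordinate[of m] by (simp add: inner_bipyramid_vertex_frame algebra_simps)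
  have base: "p * l j + h * (l m + l (m + 1)) = 0" if "j < m" for j
  proof -
    have "(\<Sum>i<m. ?c i j) = (\<Sum>i<m. if i = j then l i * p else 0)"
      using that by (intro sum.cong) (auto simp: inner_bipyramid_vertex_frame)
    then show ?thesis
      using coordinate[of j] that by (simp add: inner_bipyramid_vertex_frame algebra_simps)
  qed
  have "(\<Sum>j<m. p * l j + h * (l m + l (m + 1))) = 0"
    using base by simp
  then have "p * (\<Sum>j<m. l j) + real m * h * (l m + l (m + 1)) = 0"
    by (simp add: sum.distrib sum_distrib_left)
  moreover have "(\<Sum>j<m. l j) = - (l m + l (m + 1))"
    using weights unfolding split by linarith
  ultimately have "(real m * h - p) * (l m + l (m + 1)) = 0"
    by (simp add: algebra_simps)
  then have "l m = 0" "l (m + 1) = 0"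
    using apex_diff assms(2,3) by auto
  moreover consider "i < m" | "i = m" | "i = m + 1"
    using assms(6) by linarith
  ultimately show ?thesis
    using base[of i] assms(1) by cases auto
qed

lemma bipyramid_simplex_one_edge:
  assumes "p > 0" and "\<alpha> > 0" and "real m * h \<noteq> p"
    and apex_height: "p\<^sup>2 - 2 * p * h + real m * h\<^sup>2 + \<alpha>\<^sup>2 = 2 * p\<^sup>2"
  shows "simplex_vertices (m + 1) (bipyramid_vertex e m p h \<alpha> ` {..m + 1}) \<and>
         one_edge_v_rest_u (bipyramid_vertex e m p h \<alpha> ` {..m + 1}) (2 * \<alpha>) (sqrt 2 * p)"
proof -
  let ?f = "bipyramid_vertex e m p h \<alpha>"
  have dist: "dist (?f i) (?f j) = (if {i, j} = {m, m + 1} then 2 * \<alpha> else sqrt 2 * p)"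
    if "i \<le> m + 1" "j \<le> m + 1" "i \<noteq> j" for i j
  proof -
    have "(dist (?f i) (?f j))\<^sup>2 = (if {i, j} = {m, m + 1} then 2 * \<alpha> else sqrt 2 * p)\<^sup>2"
      using dist_bipyramid_vertex[OF that] apex_height that
      by (auto simp: doubleton_eq_iff power_mult_distrib)
    then show ?thesis
      using assms(1,2) by simp
  qed
  have "dist (?f i) (?f j) > 0" if "i \<le> m + 1" "j \<le> m + 1" "i \<noteq> j" for i j
    using dist[OF that] assms(1,2) by simp
  then have inj: "inj_on ?f {..m + 1}"
    by (metis atMost_iff dist_self inj_onI less_irrefl)
  have "\<not> affine_dependent (?f ` {..m + 1})"
  proof (rule affine_independent_imageI[OF finite_atMost inj])
    fix l
    assume "sum l {..m + 1} = 0" "(\<Sum>i\<le>m + 1. l i *\<^sub>R ?f i) = 0"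
    then show "\<forall>i\<in>{..m + 1}. l i = 0"
      using assms(1-3) by (auto intro: bipyramid_affine_relation_trivial)
  qed
  then have "simplex_vertices (m + 1) (?f ` {..m + 1})"
    using inj by (simp add: simplex_vertices_def card_image)
  moreover have "one_edge_v_rest_u (?f ` {..m + 1}) (2 * \<alpha>) (sqrt 2 * p)"
  proof -
    have apices: "?f m \<in> ?f ` {..m + 1}" "?f (m + 1) \<in> ?f ` {..m + 1}" "?f m \<noteq> ?f (m + 1)"
      using inj by (auto simp: inj_on_eq_iff)
    have "dist (?f m) (?f (m + 1)) = 2 * \<alpha>"
      using dist[of m "m + 1"] by simp
    have "dist x y = sqrt 2 * p"
      if xy: "x \<in> ?f ` {..m + 1}" "y \<in> ?f ` {..m + 1}" "x \<noteq> y" "{x, y} \<noteq> {?f m, ?f (m + 1)}" for x y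
    proof -
      obtain i j where ij: "i \<le> m + 1" "j \<le> m + 1" "x = ?f i" "y = ?f j"
        using xy(1,2) by auto
      then have "i \<noteq> j" "{i, j} \<noteq> {m, m + 1}"
        using xy(3,4) by (auto simp: doubleton_eq_iff)
      then show ?thesis
        using dist ij by simp
    qed
    then show ?thesis
      unfolding one_edge_v_rest_u_def using apices \<open>dist (?f m) (?f (m + 1)) = 2 * \<alpha>\<close> by blast
  qed
  ultimately show ?thesis ..
qed

end

lemma ex_simplex_one_edge:
  fixes u v :: real
  assumes "n \<ge> 2" and "u > 0" and "v > 0"
    and bound: "(real n - 1) * v\<^sup>2 < 2 * real n * u\<^sup>2"
    and "DIM('a::euclidean_space) \<ge> n"
  shows "\<exists>V::'a set. simplex_vertices n V \<and> one_edge_v_rest_u V v u"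
proof -
  define m where "m = n - 1"
  have n: "n = m + 1" "m \<ge> 1"
    using assms(1) by (auto simp: m_def)
  obtain e :: "nat \<Rightarrow> 'a"
    where e: "\<And>i j. i < m + 1 \<Longrightarrow> j < m + 1 \<Longrightarrow> inner (e i) (e j) = (if i = j then 1 else 0)"
    using obtain_orthonormal_family assms(5) n(1) by blast
  define p where "p = u / sqrt 2"
  define \<alpha> where "\<alpha> = v / 2"
  define D where "D = (real m + 1) * p\<^sup>2 - real m * \<alpha>\<^sup>2"
  text \<open>The larger root of \<open>m h\<^sup>2 - 2 p h + \<alpha>\<^sup>2 - p\<^sup>2 = 0\<close>: the apex height over the base
    centroid for which the apices are at distance \<open>u\<close> from the base vertices.\<close>
  define h where "h = (p + sqrt D) / real m"
  have "D > 0"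
    using bound n by (simp add: D_def p_def \<alpha>_def power_divide field_simps)
  have apex: "real m * h - p = sqrt D"
    using n(2) by (simp add: h_def)
  have "real m * (p\<^sup>2 - 2 * p * h + real m * h\<^sup>2 + \<alpha>\<^sup>2 - 2 * p\<^sup>2)
          = (real m * h - p)\<^sup>2 - D"
    by (simp add: D_def power2_eq_square algebra_simps)
  then have "p\<^sup>2 - 2 * p * h + real m * h\<^sup>2 + \<alpha>\<^sup>2 = 2 * p\<^sup>2"
    using apex \<open>D > 0\<close> n(2) by simp
  moreover have "real m * h \<noteq> p"
    using apex \<open>D > 0\<close> by auto
  moreover have "p > 0" "\<alpha> > 0"
    using assms(2,3) by (auto simp: p_def \<alpha>_def)
  ultimately have "simplex_vertices (m + 1) (bipyramid_vertex e m p h \<alpha> ` {..m + 1}) \<and>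
      one_edge_v_rest_u (bipyramid_vertex e m p h \<alpha> ` {..m + 1}) (2 * \<alpha>) (sqrt 2 * p)"
    using e by (intro bipyramid_simplex_one_edge) auto
  moreover have "2 * \<alpha> = v" "sqrt 2 * p = u"
    by (auto simp: \<alpha>_def p_def)
  ultimately show ?thesis
    using n(1) by metis
qed

lemma ratio_less_sqrt_iff:
  fixes u v c :: real
  assumes "u > 0" and "v \<ge> 0"
  shows "v / u < sqrt c \<longleftrightarrow> v\<^sup>2 < c * u\<^sup>2"
proof -
  have "v / u < sqrt c \<longleftrightarrow> sqrt ((v / u)\<^sup>2) < sqrt c"
    using assms by simp
  also have "\<dots> \<longleftrightarrow> v\<^sup>2 < c * u\<^sup>2"
    using assms(1) by (simp add: power_divide divide_less_eq)
  finally show ?thesis .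
qed

theorem corollary5p3:
  fixes n :: nat and u v :: real
  assumes "n \<ge> 2" and "u > 0" and "v > 0"
    and "DIM('a::euclidean_space) \<ge> n"
  shows "(\<exists>V::'a set. simplex_vertices n V \<and> one_edge_v_rest_u V v u) \<longleftrightarrow>
           (0 < v / u \<and> v / u < sqrt (2 * real n / (real n - 1)))"
proof -
  have "v / u < sqrt (2 * real n / (real n - 1)) \<longleftrightarrow> v\<^sup>2 < 2 * real n / (real n - 1) * u\<^sup>2"
    using assms(2,3) by (simp add: ratio_less_sqrt_iff)
  also have "\<dots> \<longleftrightarrow> (real n - 1) * v\<^sup>2 < 2 * real n * u\<^sup>2"
    using assms(1) by (simp add: field_simps)
  finally show ?thesis
    using simplex_one_edge_bound ex_simplex_one_edge assms by auto
qed

end
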